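(* Let $d\ge1$ and $n\ge 3d+2$ be integers. If $G$ is an $n$-vertex graph with $d\le\delta(G)\le\Delta(G)\le n-2d-1$, then $G$ admits a matching of size $d+1$.
   Context: $G$ is a finite simple graph; $\delta(G)$ and $\Delta(G)$ denote its minimum and maximum degree. A matching is a set of pairwise vertex-disjoint edges; its size is the number of edges. *)

theory Defs
  imports Main
begin

definition simple_graph :: "'a set \<Rightarrow> 'a set set \<Rightarrow> bool" where
  "simple_graph V E \<longleftrightarrow> finite V \<and> (\<forall>e\<in>E. e \<subseteq> V \<and> card e = 2)"

definition degree :: "'a set set \<Rightarrow> 'a \<Rightarrow> nat" where
  "degree E v = card {e\<in>E. v \<in> e}"

definition min_degree :: "'a set \<Rightarrow> 'a set set \<Rightarrow> nat" where
  "min_degree V E = Min (degree E ` V)"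

definition max_degree :: "'a set \<Rightarrow> 'a set set \<Rightarrow> nat" where
  "max_degree V E = Max (degree E ` V)"

definition matching :: "'a set set \<Rightarrow> 'a set set \<Rightarrow> bool" where
  "matching E M \<longleftrightarrow> M \<subseteq> E \<and> (\<forall>e1\<in>M. \<forall>e2\<in>M. e1 \<noteq> e2 \<longrightarrow> e1 \<inter> e2 = {})"

end

theory Submission
  imports Defs
begin

text \<open>Take a maximum matching \<open>M\<close> and suppose it has \<open>k \<le> d\<close> edges. The \<open>n - 2k\<close> unmatched
vertices form an independent set, so each sends at least \<open>\<delta> \<ge> d\<close> edges into the \<open>2k\<close> matched
vertices. Maximality also forbids augmenting paths of length three: if both ends of a matching
edge have unmatched neighbours, they have one and the same unmatched neighbour. Hence a matching
edge receives at most \<open>max 2 (\<Delta> - 1) \<le> n - 2d - 1\<close> edges from the unmatched vertices, and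
double counting gives \<open>d (n - 2d) \<le> k (n - 2d - 1)\<close>, which is impossible for \<open>k \<le> d\<close>.\<close>

definition neighbours :: "'a set set \<Rightarrow> 'a \<Rightarrow> 'a set" where
  "neighbours E v = {u. {v, u} \<in> E}"

lemma simple_graph_finite_edges:
  assumes "simple_graph V E"
  shows "finite E"
proof -
  have "E \<subseteq> Pow V" "finite V" using assms unfolding simple_graph_def by auto
  then show ?thesis by (meson finite_Pow_iff finite_subset)
qed

lemma simple_graph_edgeE:
  assumes "simple_graph V E" "e \<in> E"
  obtains x y where "e = {x, y}" "x \<noteq> y" "x \<in> V" "y \<in> V"
  using assms unfolding simple_graph_def by (metis card_2_iff insert_subset)

lemma simple_graph_edge_vertices:
  assumes "simple_graph V E" "{x, y} \<in> E"
  shows "x \<in> V" "y \<in> V" "x \<noteq> y"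
  using simple_graph_edgeE[OF assms] by (metis doubleton_eq_iff)+

lemma neighbours_subset_vertices:
  assumes "simple_graph V E"
  shows "neighbours E v \<subseteq> V"
  using simple_graph_edge_vertices[OF assms] unfolding neighbours_def by blast

lemma degree_eq_card_neighbours:
  assumes "simple_graph V E"
  shows "degree E v = card (neighbours E v)"
proof -
  have "bij_betw (\<lambda>u. {v, u}) (neighbours E v) {e \<in> E. v \<in> e}"
  proof (rule bij_betw_imageI)
    show "inj_on (\<lambda>u. {v, u}) (neighbours E v)"
      using simple_graph_edge_vertices(3)[OF assms]
      unfolding neighbours_def by (intro inj_onI) (metis doubleton_eq_iff mem_Collect_eq)
    show "(\<lambda>u. {v, u}) ` neighbours E v = {e \<in> E. v \<in> e}"
    proof (intro equalityI subsetI)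
      fix e assume "e \<in> {e \<in> E. v \<in> e}"
      then obtain x y where "e = {x, y}" "e \<in> E" "v \<in> e"
        using simple_graph_edgeE[OF assms] by blast
      then show "e \<in> (\<lambda>u. {v, u}) ` neighbours E v"
        unfolding neighbours_def by (auto simp: insert_commute)
    qed (auto simp: neighbours_def)
  qed
  then show ?thesis unfolding degree_def by (simp add: bij_betw_same_card)
qed

lemma min_degree_le_degree: "finite V \<Longrightarrow> v \<in> V \<Longrightarrow> min_degree V E \<le> degree E v"
  unfolding min_degree_def by simp

lemma degree_le_max_degree: "finite V \<Longrightarrow> v \<in> V \<Longrightarrow> degree E v \<le> max_degree V E"
  unfolding max_degree_def by simp

lemma matching_subset: "matching E M \<Longrightarrow> M' \<subseteq> M \<Longrightarrow> matching E M'"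
  unfolding matching_def by blast

lemma matching_insert:
  assumes "matching E M" "e \<in> E" "\<And>e'. e' \<in> M \<Longrightarrow> e \<inter> e' = {}"
  shows "matching E (insert e M)"
  using assms unfolding matching_def by (metis Int_commute insert_iff insert_subset)

lemma ex_matching_card:
  assumes "matching E M" "m \<le> card M"
  shows "\<exists>M'. matching E M' \<and> card M' = m"
  using obtain_subset_with_card_n[OF assms(2)] matching_subset[OF assms(1)] by metis

lemma ex_maximum_matching:
  assumes "finite E"
  shows "\<exists>M. matching E M \<and> (\<forall>M'. matching E M' \<longrightarrow> card M' \<le> card M)"
proof -
  have "matching E {}" unfolding matching_def by simp
  moreover have "\<forall>M. matching E M \<longrightarrow> card M < Suc (card E)"
    using assms unfolding matching_def by (simp add: card_mono le_imp_less_Suc)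
  ultimately show ?thesis using ex_has_greatest_nat[of "matching E" "{}" card] by blast
qed

locale maximum_matching =
  fixes V :: "'a set" and E M :: "'a set set"
  assumes simple_graph: "simple_graph V E"
    and matching: "matching E M"
    and maximum: "\<And>M'. matching E M' \<Longrightarrow> card M' \<le> card M"
begin

definition unmatched :: "'a set" where
  "unmatched = V - \<Union>M"

lemma matching_edges: "M \<subseteq> E"
  and matching_disjoint: "e \<in> M \<Longrightarrow> e' \<in> M \<Longrightarrow> e \<noteq> e' \<Longrightarrow> e \<inter> e' = {}"
  using matching unfolding matching_def by auto

lemma finite_vertices: "finite V"
  using simple_graph unfolding simple_graph_def by simp

lemma finite_matching: "finite M"
  using matching_edges simple_graph_finite_edges[OF simple_graph] by (rule finite_subset)

lemma matching_edgeE: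
  assumes "e \<in> M"
  obtains x y where "e = {x, y}" "x \<noteq> y" "x \<in> V" "y \<in> V"
  using simple_graph_edgeE[OF simple_graph] assms matching_edges by blast

lemma matched_vertices_subset: "\<Union>M \<subseteq> V"
  by (blast elim: matching_edgeE)

lemma card_unmatched: "card unmatched = card V - 2 * card M"
proof -
  have "card (\<Union>M) = (\<Sum>e\<in>M. card e)"
  proof (rule card_Union_disjoint)
    show "pairwise disjnt M"
      using matching_disjoint unfolding pairwise_def disjnt_def by blast
  qed (auto elim: matching_edgeE)
  also have "\<dots> = (\<Sum>e\<in>M. 2)"
    by (rule sum.cong) (auto elim: matching_edgeE)
  finally have "card (\<Union>M) = 2 * card M" by simp
  then show ?thesis
    unfolding unmatched_def
    using matched_vertices_subset finite_vertices by (simp add: card_Diff_subset finite_subset)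
qed

lemma unmatched_neighbours_matched:
  assumes "u \<in> unmatched"
  shows "neighbours E u \<subseteq> \<Union>M"
proof
  fix v assume v: "v \<in> neighbours E u"
  show "v \<in> \<Union>M"
  proof (rule ccontr)
    assume "v \<notin> \<Union>M"
    with assms v have "matching E (insert {u, v} M)"
      unfolding neighbours_def unmatched_def by (intro matching_insert[OF matching]) auto
    then have "card (insert {u, v} M) \<le> card M" by (rule maximum)
    moreover have "{u, v} \<notin> M" using assms unfolding unmatched_def by blast
    ultimately show False using finite_matching by simp
  qed
qed

text \<open>There is no augmenting path \<open>u x y u'\<close> of length three.\<close>

lemma unmatched_neighbours_of_matched_edge:
  assumes xy: "{x, y} \<in> M" "x \<noteq> y"
    and u: "u \<in> unmatched" "{x, u} \<in> E"
    and u': "u' \<in> unmatched" "{y, u'} \<in> E"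
  shows "u = u'"
proof (rule ccontr)
  assume "u \<noteq> u'"
  let ?M0 = "M - {{x, y}}"
  have unmatched_outside: "u \<notin> e" "u' \<notin> e" if "e \<in> M" for e
    using that u u' unfolding unmatched_def by auto
  have disjoint_rest: "{x, u} \<inter> e = {}" "{y, u'} \<inter> e = {}" if "e \<in> ?M0" for e
    using that matching_disjoint[of "{x, y}" e] xy unmatched_outside by auto
  have x_y_matched: "x \<in> \<Union>M" "y \<in> \<Union>M" using xy by auto
  have "matching E (insert {x, u} (insert {y, u'} ?M0))"
  proof (intro matching_insert)
    show "matching E ?M0" using matching by (rule matching_subset) blast
    show "{x, u} \<inter> e = {}" if "e \<in> insert {y, u'} ?M0" for e
      using that disjoint_rest \<open>u \<noteq> u'\<close> xy(2) x_y_matched u(1) u'(1) unfolding unmatched_def by auto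
  qed (use u u' disjoint_rest in auto)
  then have "card (insert {x, u} (insert {y, u'} ?M0)) \<le> card M" by (rule maximum)
  moreover have "card (insert {x, u} (insert {y, u'} ?M0)) = card M + 1"
  proof -
    have "{x, u} \<notin> insert {y, u'} ?M0" "{y, u'} \<notin> ?M0"
      using unmatched_outside x_y_matched u(1) xy(2) unfolding unmatched_def
      by (auto simp: doubleton_eq_iff)
    moreover have "card ?M0 + 1 = card M"
      using card_Suc_Diff1[OF finite_matching xy(1)] by simp
    ultimately show ?thesis using finite_matching by simp
  qed
  ultimately show False by simp
qed

lemma card_unmatched_neighbours_le_max_degree:
  assumes "{x, y} \<in> M"
  shows "card (neighbours E y \<inter> unmatched) \<le> max_degree V E - 1"
proof -
  have y: "y \<in> V" and x_nbr: "x \<in> neighbours E y"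
    using assms matching_edges simple_graph_edge_vertices[OF simple_graph]
    unfolding neighbours_def by (auto simp: insert_commute)
  have fin: "finite (neighbours E y)"
    using neighbours_subset_vertices[OF simple_graph] finite_vertices by (rule finite_subset)
  have "neighbours E y \<inter> unmatched \<subseteq> neighbours E y - {x}"
    using assms unfolding unmatched_def by auto
  then have "card (neighbours E y \<inter> unmatched) \<le> card (neighbours E y - {x})"
    using fin by (intro card_mono) auto
  also have "\<dots> = card (neighbours E y) - 1"
    using x_nbr by (rule card_Diff_singleton)
  also have "\<dots> \<le> max_degree V E - 1"
    using degree_le_max_degree[OF finite_vertices y, of E]
      degree_eq_card_neighbours[OF simple_graph, of y] by simp
  finally show ?thesis .
qed

lemma card_unmatched_neighbours_le_one:
  assumes "{x, y} \<in> M" "x \<noteq> y" "neighbours E y \<inter> unmatched \<noteq> {}"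
  shows "card (neighbours E x \<inter> unmatched) \<le> 1"
proof -
  obtain u' where "u' \<in> unmatched" "{y, u'} \<in> E"
    using assms(3) unfolding neighbours_def by blast
  then have "neighbours E x \<inter> unmatched \<subseteq> {u'}"
    using unmatched_neighbours_of_matched_edge[OF assms(1,2)] unfolding neighbours_def by blast
  then show ?thesis by (auto dest!: subset_singletonD)
qed

lemma card_unmatched_neighbours_matched_edge:
  assumes "{x, y} \<in> M" "x \<noteq> y"
  shows "card (neighbours E x \<inter> unmatched) + card (neighbours E y \<inter> unmatched)
    \<le> max 2 (max_degree V E - 1)"
proof -
  have yx: "{y, x} \<in> M" using assms(1) by (simp add: insert_commute)
  note bounds = card_unmatched_neighbours_le_max_degree[OF assms(1)]
    card_unmatched_neighbours_le_max_degree[OF yx]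
  show ?thesis
  proof (cases "neighbours E x \<inter> unmatched = {} \<or> neighbours E y \<inter> unmatched = {}")
    case True
    then show ?thesis using bounds by (auto simp: max_def)
  next
    case False
    then have "card (neighbours E x \<inter> unmatched) \<le> 1" "card (neighbours E y \<inter> unmatched) \<le> 1"
      using card_unmatched_neighbours_le_one[OF assms] card_unmatched_neighbours_le_one[OF yx]
        assms(2) by auto
    then show ?thesis by (simp add: max_def)
  qed
qed

lemma card_unmatched_mult_min_degree_le:
  "card unmatched * min_degree V E \<le> (\<Sum>u\<in>unmatched. degree E u)"
  using sum_bounded_below[of unmatched "min_degree V E" "degree E"]
    min_degree_le_degree[OF finite_vertices] unfolding unmatched_def by simp

lemma sum_degree_unmatched_le:
  "(\<Sum>u\<in>unmatched. degree E u) \<le> card M * max 2 (max_degree V E - 1)"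
proof -
  let ?g = "\<lambda>s. card (neighbours E s \<inter> unmatched)"
  have fin_U: "finite unmatched" unfolding unmatched_def using finite_vertices by simp
  have fin_S: "finite (\<Union>M)" using matched_vertices_subset finite_vertices by (rule finite_subset)
  have degree_unmatched: "degree E u = card {s \<in> \<Union>M. {u, s} \<in> E}" if "u \<in> unmatched" for u
  proof -
    have "neighbours E u = {s \<in> \<Union>M. {u, s} \<in> E}"
      using unmatched_neighbours_matched[OF that] unfolding neighbours_def by blast
    then show ?thesis using degree_eq_card_neighbours[OF simple_graph] by simp
  qed
  have g_eq: "?g s = card {u \<in> unmatched. {u, s} \<in> E}" for s
    unfolding neighbours_def by (rule arg_cong[where f = card]) (auto simp: insert_commute)
  have "(\<Sum>u\<in>unmatched. degree E u) = (\<Sum>u\<in>unmatched. card {s \<in> \<Union>M. {u, s} \<in> E})"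
    using degree_unmatched by simp
  also have "\<dots> = (\<Sum>s\<in>\<Union>M. card {u \<in> unmatched. {u, s} \<in> E})"
    using sum.swap_restrict[OF fin_U fin_S, of "\<lambda>_ _. 1 :: nat" "\<lambda>u s. {u, s} \<in> E"] by simp
  also have "\<dots> = (\<Sum>e\<in>M. \<Sum>s\<in>e. ?g s)"
  proof -
    have "\<forall>e\<in>M. finite e" by (auto elim: matching_edgeE)
    moreover have "\<forall>e\<in>M. \<forall>e'\<in>M. e \<noteq> e' \<longrightarrow> e \<inter> e' = {}" using matching_disjoint by blast
    ultimately show ?thesis unfolding g_eq by (simp add: sum.Union_disjoint)
  qed
  also have "\<dots> \<le> (\<Sum>e\<in>M. max 2 (max_degree V E - 1))"
  proof (rule sum_mono)
    fix e assume "e \<in> M"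
    then obtain x y where "e = {x, y}" "x \<noteq> y" by (rule matching_edgeE)
    then show "(\<Sum>s\<in>e. ?g s) \<le> max 2 (max_degree V E - 1)"
      using card_unmatched_neighbours_matched_edge \<open>e \<in> M\<close> by simp
  qed
  finally show ?thesis by simp
qed

end

theorem lemma2p8:
  fixes V :: "'a set" and E :: "'a set set" and d n :: nat
  assumes "simple_graph V E"
    and "card V = n"
    and "d \<ge> 1"
    and "n \<ge> 3 * d + 2"
    and "d \<le> min_degree V E"
    and "max_degree V E \<le> n - 2 * d - 1"
  shows "\<exists>M. matching E M \<and> card M = d + 1"
proof -
  obtain M where M: "matching E M" and maximum: "\<forall>M'. matching E M' \<longrightarrow> card M' \<le> card M"
    using ex_maximum_matching[OF simple_graph_finite_edges[OF assms(1)]] by blast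
  interpret maximum_matching V E M
    using assms(1) M maximum by unfold_locales auto
  show ?thesis
  proof (rule ccontr)
    assume "\<nexists>M. matching E M \<and> card M = d + 1"
    then have small: "card M \<le> d" using ex_matching_card[OF M, of "d + 1"] by fastforce
    have "n - 2 * d \<le> card unmatched"
      using card_unmatched small assms(2) by linarith
    then have "(n - 2 * d) * d \<le> card unmatched * min_degree V E"
      using assms(5) by (rule mult_le_mono)
    also have "\<dots> \<le> (\<Sum>u\<in>unmatched. degree E u)"
      by (rule card_unmatched_mult_min_degree_le)
    also have "\<dots> \<le> card M * max 2 (max_degree V E - 1)"
      by (rule sum_degree_unmatched_le)
    also have "\<dots> \<le> d * (n - 2 * d - 1)"
      using small assms(3,4,6) by (intro mult_le_mono) auto
    finally show False using assms(3,4) by (simp add: mult.commute[of d])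
  qed
qed

end
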